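(* Let $-\tfrac12\le\alpha<1$, $n\in\mathbb{N}=\{1,2,3,\dots\}$, and $\zeta\in\mathbb{C}$ with $|\zeta|\le\frac{1}{2n-1}$. Let $f=h+\overline{g}$ be harmonic in $\mathbb{D}=\{|z|<1\}$ with $$h(z)=z+\sum_{k=2}^\infty a_kz^k,\qquad g(z)=\sum_{k=1}^\infty b_kz^k,$$ such that $\operatorname{Re}\big(1+\frac{zh''(z)}{h'(z)}\big)>\alpha$ for all $z\in\mathbb{D}$ and $g'(z)=\zeta z^nh'(z)$ for all $z\in\mathbb{D}$. Then $$|a_k|\le\frac{1}{k!}\prod_{j=2}^{k}(j-2\alpha)\qquad(k=2,3,\dots),$$ and $$|b_{n+1}|\le\frac{|\zeta|}{n+1},\qquad |b_{k+n}|\le\frac{|\zeta|}{(k+n)(k-1)!}\prod_{j=2}^{k}(j-2\alpha)\qquad(k=2,3,\dots).$$ These bounds are sharp: equality holds for the function $$f(z)=\int_0^z\frac{dt}{(1-\delta t)^{2-2\alpha}}+\overline{\int_0^z\frac{\zeta t^n}{(1-\delta t)^{2-2\alpha}}\,dt}\qquad(|\delta|=1).$$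
   Context: Powers are taken with the principal branch. *)

theory Defs
  imports "HOL-Complex_Analysis.Complex_Analysis"
begin

definition ext_h :: "real \<Rightarrow> complex \<Rightarrow> complex \<Rightarrow> complex" where
  "ext_h \<alpha> \<delta> z = contour_integral (linepath 0 z)
      (\<lambda>t. 1 / ((1 - \<delta> * t) powr complex_of_real (2 - 2 * \<alpha>)))"

definition ext_g :: "real \<Rightarrow> complex \<Rightarrow> nat \<Rightarrow> complex \<Rightarrow> complex \<Rightarrow> complex" where
  "ext_g \<alpha> \<zeta> n \<delta> z = contour_integral (linepath 0 z)
      (\<lambda>t. \<zeta> * t ^ n / ((1 - \<delta> * t) powr complex_of_real (2 - 2 * \<alpha>)))"

end

theory Submission
  imports Defs
begin

text \<open>
  Write \<open>h' = \<Sum>k. d_k z^k\<close> with \<open>d_0 = 1\<close>. The convexity hypothesis means that \<open>r = z h''/h'\<close>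
  satisfies \<open>Re (1 + r / (1 - \<alpha>)) > 0\<close>, so by Caratheodory's lemma every coefficient of \<open>r\<close>
  has modulus at most \<open>2 - 2\<alpha>\<close>. Comparing coefficients in \<open>z h'' = r h'\<close> gives
  \<open>k d_k = \<Sum>i<k. r_(i+1) d_(k-1-i)\<close>; the majorant \<open>pochhammer (2 - 2\<alpha>) k / k!\<close> satisfies this
  recurrence with equality when every \<open>r_i\<close> equals \<open>2 - 2\<alpha>\<close>, so it bounds \<open>|d_k|\<close> by induction.
  Then \<open>a_(k+1) = d_k / (k+1)\<close>, and \<open>g' = \<zeta> z^n h'\<close> gives \<open>(k+n+1) b_(k+n+1) = \<zeta> d_k\<close>.

  For the extremal functions, \<open>h' = (1 - \<delta>z) powr -(2 - 2\<alpha>)\<close> has binomial coefficients of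
  modulus exactly \<open>pochhammer (2 - 2\<alpha>) k / k!\<close>, and \<open>z h''/h' = (2 - 2\<alpha>) \<delta>z / (1 - \<delta>z)\<close> has
  real part \<open>> \<alpha> - 1\<close> because \<open>u / (1 - u)\<close> maps the unit disc onto \<open>Re w > -1/2\<close>.
\<close>

section \<open>Caratheodory's lemma\<close>

lemma fps_expansion_coeff_norm_le_1:
  fixes W :: "complex \<Rightarrow> complex"
  assumes holW: "W holomorphic_on ball 0 1" and bound: "\<And>z. z \<in> ball 0 1 \<Longrightarrow> norm (W z) \<le> 1"
  shows "norm (fps_expansion W 0 $ m) \<le> 1"
proof -
  define X where "X = norm ((deriv ^^ m) W 0)"
  have scaled: "X * r ^ m \<le> fact m" if r: "0 < r" "r < 1" for r :: real
  proof -
    have "X \<le> fact m * 1 / r ^ m" unfolding X_def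
    proof (rule Cauchy_inequality)
      show "W holomorphic_on ball 0 r"
        using r by (intro holomorphic_on_subset[OF holW]) auto
      show "continuous_on (cball 0 r) W"
        using holW r by (intro holomorphic_on_imp_continuous_on holomorphic_on_subset[OF holW]) auto
      show "norm (W x) \<le> 1" if "norm (0 - x) = r" for x
        using bound that r by simp
    qed (use r in auto)
    thus ?thesis using r by (simp add: field_simps)
  qed
  have "\<forall>\<^sub>F r in at_left (1::real). X * r ^ m \<le> fact m"
    by (rule eventually_mono[OF eventually_at_left_real[of 0 1]]) (use scaled in auto)
  hence "X * 1 ^ m \<le> fact m"
    by (intro tendsto_upperbound[of "\<lambda>r. X * r ^ m"] tendsto_intros) auto
  thus ?thesis by (simp add: X_def fps_expansion_def norm_divide)
qed

lemma cmod_diff_one_less_add_one: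
  fixes w :: complex
  assumes "Re w > 0"
  shows "cmod (w - 1) < cmod (w + 1)"
proof -
  have "cmod (w - 1) ^ 2 = (Re w - 1) ^ 2 + (Im w) ^ 2" "cmod (w + 1) ^ 2 = (Re w + 1) ^ 2 + (Im w) ^ 2"
    by (simp_all add: cmod_power2)
  hence "cmod (w - 1) ^ 2 < cmod (w + 1) ^ 2"
    using assms by (simp add: power2_eq_square algebra_simps)
  thus ?thesis by (simp add: power_less_imp_less_base)
qed

lemma sum_powers_root_unity:
  assumes m: "m > 0"
  shows "(\<Sum>j<m. (cis (2 * pi / m) ^ j) ^ k) = (if m dvd k then of_nat m else 0)"
proof -
  define e where "e = cis (2 * pi / m)"
  have e_pow: "e ^ l = cis (2 * pi * real l / real m)" for l
    unfolding e_def by (subst Complex.DeMoivre) (simp add: field_simps)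
  have "e ^ m = 1" using m by (simp add: e_pow)
  have swap: "(e ^ j) ^ k = (e ^ k) ^ j" for j
    by (simp flip: power_mult add: mult.commute)
  show ?thesis
  proof (cases "m dvd k")
    case True
    then obtain l where "k = m * l" by blast
    hence "e ^ k = 1" using \<open>e ^ m = 1\<close> by (simp add: power_mult)
    thus ?thesis using True by (simp add: swap flip: e_def)
  next
    case False
    have inj: "inj_on (\<lambda>l. e ^ l) {..<m}"
      using Complex.bij_betw_roots_unity[OF m] by (simp add: bij_betw_def e_pow)
    have "k mod m \<noteq> 0" "k mod m < m" using False m by (auto simp: dvd_eq_mod_eq_0)
    hence "e ^ (k mod m) \<noteq> e ^ 0"
      using inj_onD[OF inj, of "k mod m" 0] m by auto
    moreover have "e ^ k = (e ^ m) ^ (k div m) * e ^ (k mod m)"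
      by (simp flip: power_mult power_add)
    hence "e ^ k = e ^ (k mod m)" using \<open>e ^ m = 1\<close> by simp
    ultimately have "e ^ k \<noteq> 1" by simp
    moreover have "(e ^ k) ^ m = 1"
      using \<open>e ^ m = 1\<close> swap[of m] by simp
    ultimately have "(\<Sum>j<m. (e ^ k) ^ j) = 0" by (simp add: sum_gp_strict)
    thus ?thesis using False by (simp add: swap flip: e_def)
  qed
qed

lemma coeff_bound_positive_real_part_gap:
  fixes q :: "complex \<Rightarrow> complex"
  assumes holq: "q holomorphic_on ball 0 1" and req: "\<And>z. z \<in> ball 0 1 \<Longrightarrow> Re (q z) > 0"
    and q0: "q 0 = 1" and m: "m \<ge> 1"
    and gap: "\<And>k. 0 < k \<Longrightarrow> k < m \<Longrightarrow> fps_expansion q 0 $ k = 0"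
  shows "norm (fps_expansion q 0 $ m) \<le> 2"
proof -
  define F where "F = fps_expansion q 0"
  \<comment> \<open>The Cayley transform \<open>W\<close> maps the disc into itself, and by the gap
     \<open>W = (F_m / 2) z^m + \<dots>\<close>.\<close>
  define W where "W = (\<lambda>z. (q z - 1) / (q z + 1))"
  define G where "G = fps_expansion W 0"
  have q_plus_1_nz: "q z + 1 \<noteq> 0" if "z \<in> ball 0 1" for z
    using req[OF that] by (auto simp: complex_eq_iff)
  have holW: "W holomorphic_on ball 0 1"
    unfolding W_def by (intro holomorphic_intros holq) (use q_plus_1_nz in auto)
  have "norm (W z) \<le> 1" if z: "z \<in> ball 0 1" for z
    using cmod_diff_one_less_add_one[OF req[OF z]] q_plus_1_nz[OF z]
    by (simp add: W_def norm_divide divide_le_eq)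
  hence G_m: "norm (G $ m) \<le> 1"
    unfolding G_def by (rule fps_expansion_coeff_norm_le_1[OF holW])
  have qF: "q has_fps_expansion F"
    using holq unfolding F_def by (intro has_fps_expansion_fps_expansion) auto
  have WG: "W has_fps_expansion G"
    using holW unfolding G_def by (intro has_fps_expansion_fps_expansion) auto
  have Cayley_expansion: "(\<lambda>z. q z - 1) has_fps_expansion G * (F + 1)"
  proof (rule has_fps_expansion_cong[THEN iffD1])
    show "\<forall>\<^sub>F z in nhds 0. W z * (q z + 1) = q z - 1"
      using eventually_nhds_in_open[of "ball 0 1" 0] by (rule eventually_mono) (auto simp: W_def q_plus_1_nz)
    show "(\<lambda>z. W z * (q z + 1)) has_fps_expansion G * (F + 1)"
      by (intro has_fps_expansion_mult has_fps_expansion_add qF WG) auto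
  qed auto
  have cayley: "F - 1 = G * (F + 1)"
    by (intro fps_expansion_unique_complex[OF _ Cayley_expansion] has_fps_expansion_diff qF) auto
  have "F $ m = (G * (F + 1)) $ m"
    using m by (simp flip: cayley)
  also have "\<dots> = (\<Sum>i=0..m. if i = m then 2 * G $ m else 0)"
    unfolding fps_mult_nth
  proof (intro sum.cong refl)
    fix i assume i: "i \<in> {0..m}"
    have "G $ 0 = 0" "F $ 0 = 1"
      by (simp_all add: G_def F_def fps_expansion_def W_def q0)
    moreover have "F $ (m - i) = 0" if "0 < i" "i < m"
      using gap[of "m - i"] that by (simp add: F_def)
    ultimately show "G $ i * (F + 1) $ (m - i) = (if i = m then 2 * G $ m else 0)"
      using i by (cases "i = 0") auto
  qed
  finally have "F $ m = 2 * G $ m" by simp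
  thus ?thesis using G_m by (simp add: F_def norm_mult)
qed

lemma Caratheodory_coeff_bound:
  fixes q :: "complex \<Rightarrow> complex"
  assumes holq: "q holomorphic_on ball 0 1" and req: "\<And>z. z \<in> ball 0 1 \<Longrightarrow> Re (q z) > 0"
    and q0: "q 0 = 1" and m: "m \<ge> 1"
  shows "norm (fps_expansion q 0 $ m) \<le> 2"
proof -
  define F where "F = fps_expansion q 0"
  define e where "e = cis (2 * pi / m)"
  \<comment> \<open>Averaging over the rotations by \<open>m\<close>-th roots of unity kills the coefficients of index
     not divisible by \<open>m\<close>, producing the gap needed above.\<close>
  define Q where "Q = (\<lambda>z. (1 / of_nat m) * (\<Sum>j<m. (q \<circ> (\<lambda>z. e ^ j * z)) z))"
  have rot: "e ^ j * z \<in> ball 0 1" if "z \<in> ball 0 1" for j z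
    using that by (simp add: e_def norm_mult norm_power)
  have holQ: "Q holomorphic_on ball 0 1"
    unfolding Q_def by (intro holomorphic_intros holomorphic_on_compose_gen[OF _ holq]) (auto intro: rot)
  have reQ: "Re (Q z) > 0" if z: "z \<in> ball 0 1" for z
  proof -
    have "(\<Sum>j<m. Re (q (e ^ j * z))) > 0"
      using m by (intro sum_pos req rot z) (auto simp: lessThan_empty_iff)
    thus ?thesis using m by (simp add: Q_def Re_sum)
  qed
  have Q0: "Q 0 = 1" using m by (simp add: Q_def q0)
  have "Q has_fps_expansion fps_const (1 / of_nat m) * (\<Sum>j<m. F oo (fps_const (e ^ j) * fps_X))"
    unfolding Q_def F_def using holq
    by (intro has_fps_expansion_cmult_left has_fps_expansion_sum has_fps_expansion_compose
          has_fps_expansion_fps_expansion has_fps_expansion_fps_X) auto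
  hence Q_coeff: "fps_expansion Q 0 $ k = (if m dvd k then F $ k else 0)" for k
    using sum_powers_root_unity[of m k] m
    by (simp add: fps_expansion_eqI fps_sum_nth fps_nth_compose_linear e_def
                  flip: sum_distrib_right)
  have "norm (fps_expansion Q 0 $ m) \<le> 2"
    using m by (intro coeff_bound_positive_real_part_gap holQ reQ Q0) (auto simp: Q_coeff)
  thus ?thesis by (simp add: Q_coeff F_def)
qed

section \<open>Coefficient bounds\<close>

lemma prod_of_nat_minus_eq_pochhammer:
  fixes x :: "'a :: comm_ring_1"
  assumes "k \<ge> 1"
  shows "(\<Prod>j=2..k. of_nat j - x) = pochhammer (2 - x) (k - 1)"
proof -
  have "(\<Prod>j=2..Suc m. of_nat j - x) = pochhammer (2 - x) m" for m
  proof (induction m)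
    case (Suc m)
    have "(\<Prod>j=2..Suc (Suc m). of_nat j - x) = pochhammer (2 - x) m * (of_nat (Suc (Suc m)) - x)"
      using Suc.IH by (subst prod.cl_ivl_Suc) (simp del: prod.cl_ivl_Suc)
    also have "\<dots> = pochhammer (2 - x) (Suc m)"
      by (simp add: pochhammer_Suc algebra_simps)
    finally show ?case .
  qed simp
  thus ?thesis using assms by (cases k) simp_all
qed

lemma prod_div_fact_eq_pochhammer:
  fixes x :: real
  assumes "k \<ge> 1"
  shows "(\<Prod>j=2..k. real j - x) / fact k = pochhammer (2 - x) (k - 1) / fact (k - 1) / real k"
  using prod_of_nat_minus_eq_pochhammer[OF assms, of x] assms
  by (cases k) (simp_all add: field_simps)

lemma pochhammer_div_fact_recurrence:
  fixes c :: "'a :: field_char_0"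
  shows "of_nat k * (pochhammer c k / fact k) = c * (\<Sum>j<k. pochhammer c j / fact j)"
proof (induction k)
  case (Suc k)
  have "of_nat (Suc k) * (pochhammer c (Suc k) / fact (Suc k)) = pochhammer c k * (c + of_nat k) / fact k"
    by (simp add: pochhammer_Suc del: of_nat_Suc)
  also have "\<dots> = c * (pochhammer c k / fact k) + of_nat k * (pochhammer c k / fact k)"
    by (simp add: field_simps)
  also have "\<dots> = c * (pochhammer c k / fact k) + c * (\<Sum>j<k. pochhammer c j / fact j)"
    by (simp only: Suc.IH)
  finally show ?case by (simp add: algebra_simps)
qed simp

lemma fps_coeff_bound_by_pochhammer:
  fixes D Q :: "complex fps" and c :: real
  assumes ode: "fps_X * fps_deriv D = Q * D" and Q0: "Q $ 0 = 0"
    and Q_bound: "\<And>m. norm (Q $ m) \<le> c" and D0: "norm (D $ 0) \<le> 1"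
  shows "norm (D $ k) \<le> pochhammer c k / fact k"
proof (induction k rule: less_induct)
  case (less k)
  define E where "E = (\<lambda>j. pochhammer c j / fact j :: real)"
  have "c \<ge> 0" using Q_bound[of 0] by (simp add: Q0)
  show ?case
  proof (cases k)
    case 0
    thus ?thesis using D0 by simp
  next
    case (Suc l)
    have "of_nat (Suc l) * D $ Suc l = (Q * D) $ Suc l"
      by (simp flip: ode)
    also have "\<dots> = (\<Sum>i\<le>Suc l. Q $ i * D $ (Suc l - i))"
      by (simp add: fps_mult_nth atLeast0AtMost)
    also have "\<dots> = (\<Sum>i\<le>l. Q $ Suc i * D $ (l - i))"
      by (subst sum.atMost_Suc_shift) (simp add: Q0)
    finally have "real (Suc l) * norm (D $ Suc l) = norm (\<Sum>i\<le>l. Q $ Suc i * D $ (l - i))"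
      by (metis norm_mult norm_of_nat)
    also have "\<dots> \<le> (\<Sum>i\<le>l. c * E (l - i))"
    proof (intro order_trans[OF norm_sum] sum_mono)
      fix i assume "i \<in> {..l}"
      have "norm (D $ (l - i)) \<le> E (l - i)" using less Suc by (simp add: E_def)
      thus "norm (Q $ Suc i * D $ (l - i)) \<le> c * E (l - i)"
        unfolding norm_mult using Q_bound \<open>c \<ge> 0\<close> by (intro mult_mono) auto
    qed
    also have "\<dots> = c * (\<Sum>i<Suc l. E (Suc l - Suc i))"
      by (simp add: sum_distrib_left lessThan_Suc_atMost)
    also have "\<dots> = c * (\<Sum>j<Suc l. E j)"
      by (simp only: sum.nat_diff_reindex)
    also have "\<dots> = real (Suc l) * E (Suc l)"
      unfolding E_def by (rule pochhammer_div_fact_recurrence[symmetric])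
    finally have "real (Suc l) * norm (D $ Suc l) \<le> real (Suc l) * E (Suc l)" .
    hence "norm (D $ Suc l) \<le> E (Suc l)"
      by (simp only: mult_le_cancel_left_pos of_nat_0_less_iff zero_less_Suc)
    thus ?thesis using Suc by (simp only: E_def)
  qed
qed

lemma convex_of_order_deriv_coeff_bound:
  fixes h :: "complex \<Rightarrow> complex" and A :: "complex fps" and \<alpha> :: real
  assumes \<alpha>: "\<alpha> < 1" and hA: "h has_fps_expansion A" and holh: "h holomorphic_on ball 0 1"
    and A1: "A $ 1 = 1" and h'_nz: "\<And>z. z \<in> ball 0 1 \<Longrightarrow> deriv h z \<noteq> 0"
    and convex: "\<And>z. z \<in> ball 0 1 \<Longrightarrow> Re (1 + z * deriv (deriv h) z / deriv h z) > \<alpha>"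
  shows "norm (fps_deriv A $ k) \<le> pochhammer (2 - 2 * \<alpha>) k / fact k"
proof -
  define D where "D = fps_deriv A"
  define r where "r = (\<lambda>z. z * deriv (deriv h) z / deriv h z)"
  define R where "R = fps_expansion r 0"
  have hD: "deriv h has_fps_expansion D"
    unfolding D_def by (rule has_fps_expansion_deriv[OF hA])
  have hol1: "deriv h holomorphic_on ball 0 1"
    by (rule holomorphic_deriv[OF holh]) auto
  have holr: "r holomorphic_on ball 0 1"
    unfolding r_def by (intro holomorphic_intros hol1 holomorphic_deriv[OF hol1]) (auto simp: h'_nz)
  have rR: "r has_fps_expansion R"
    using holr unfolding R_def by (intro has_fps_expansion_fps_expansion) auto
  have R0: "R $ 0 = 0" by (simp add: R_def fps_expansion_def r_def)
  have log_deriv_expansion: "(\<lambda>z. z * deriv (deriv h) z) has_fps_expansion R * D"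
  proof (rule has_fps_expansion_cong[THEN iffD1])
    show "\<forall>\<^sub>F z in nhds 0. r z * deriv h z = z * deriv (deriv h) z"
      using eventually_nhds_in_open[of "ball 0 1" 0] by (rule eventually_mono) (auto simp: r_def h'_nz)
    show "(\<lambda>z. r z * deriv h z) has_fps_expansion R * D"
      by (intro has_fps_expansion_mult rR hD)
  qed auto
  have ode: "fps_X * fps_deriv D = R * D"
    by (intro fps_expansion_unique_complex[OF _ log_deriv_expansion] has_fps_expansion_mult
          has_fps_expansion_deriv hD has_fps_expansion_fps_X)
  have R_bound: "norm (R $ m) \<le> 2 - 2 * \<alpha>" for m
  proof (cases "m = 0")
    case False
    define q where "q = (\<lambda>z. 1 + complex_of_real (1 / (1 - \<alpha>)) * r z)"
    have "q has_fps_expansion 1 + fps_const (complex_of_real (1 / (1 - \<alpha>))) * R"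
      unfolding q_def by (intro has_fps_expansion_add has_fps_expansion_cmult_left rR) auto
    hence q_coeff: "fps_expansion q 0 $ m = R $ m / complex_of_real (1 - \<alpha>)"
      using False by (simp add: fps_expansion_eqI divide_inverse mult.commute)
    have "Re (q z) > 0" if "z \<in> ball 0 1" for z
    proof -
      have "Re (q z) = 1 + Re (r z) / (1 - \<alpha>)" by (simp add: q_def)
      moreover have "Re (r z) > \<alpha> - 1" using convex[OF that] by (simp add: r_def)
      hence "Re (r z) / (1 - \<alpha>) > -1" using \<alpha> by (simp add: less_divide_eq)
      ultimately show ?thesis by linarith
    qed
    moreover have "q holomorphic_on ball 0 1" unfolding q_def by (intro holomorphic_intros holr)
    ultimately have "norm (fps_expansion q 0 $ m) \<le> 2"
      using False by (intro Caratheodory_coeff_bound) (auto simp: q_def r_def)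
    moreover have "cmod (1 - complex_of_real \<alpha>) = 1 - \<alpha>"
      using \<alpha> norm_of_real[of "1 - \<alpha>"] by simp
    ultimately show ?thesis using \<alpha> by (simp add: q_coeff norm_divide field_simps)
  qed (use \<alpha> in \<open>simp add: R0\<close>)
  have "norm (D $ 0) \<le> 1" using A1 by (simp add: D_def)
  thus ?thesis
    unfolding D_def by (rule fps_coeff_bound_by_pochhammer[OF ode[unfolded D_def] R0 R_bound])
qed

lemma unit_disc_power_series:
  fixes c :: "nat \<Rightarrow> complex" and f :: "complex \<Rightarrow> complex"
  assumes sums: "\<forall>z\<in>ball 0 1. (\<lambda>k. c k * z ^ k) sums f z"
  shows "fps_conv_radius (Abs_fps c) \<ge> 1"
    and "\<And>z. z \<in> ball 0 1 \<Longrightarrow> eval_fps (Abs_fps c) z = f z"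
    and "f has_fps_expansion Abs_fps c"
    and "f holomorphic_on ball 0 1"
proof -
  show radius: "fps_conv_radius (Abs_fps c) \<ge> 1"
    unfolding fps_conv_radius_def
  proof (rule conv_radius_geI_ex')
    fix r :: real assume "0 < r" "ereal r < 1"
    hence "complex_of_real r \<in> ball 0 1" by simp
    thus "summable (\<lambda>k. Abs_fps c $ k * complex_of_real r ^ k)"
      using sums sums_summable by fastforce
  qed
  show eval: "eval_fps (Abs_fps c) z = f z" if "z \<in> ball 0 1" for z
    using sums that unfolding eval_fps_def by (simp add: sums_iff)
  have "\<forall>\<^sub>F z in nhds 0. z \<in> ball (0::complex) 1"
    by (intro eventually_nhds_in_open) auto
  hence "\<forall>\<^sub>F z in nhds 0. (\<lambda>k. Abs_fps c $ k * z ^ k) sums f z"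
    by (rule eventually_mono) (use sums in auto)
  thus "f has_fps_expansion Abs_fps c"
    by (rule has_fps_expansionI)
  have "eval_fps (Abs_fps c) holomorphic_on ball 0 1"
    by (intro holomorphic_on_eval_fps) (auto simp: subset_eq intro!: less_le_trans[OF _ radius])
  thus "f holomorphic_on ball 0 1"
    by (rule holomorphic_transform) (use eval in auto)
qed

lemma convex_harmonic_coeff_bounds:
  fixes \<alpha> :: real and n :: nat and \<zeta> :: complex
    and h g :: "complex \<Rightarrow> complex" and a b :: "nat \<Rightarrow> complex"
  assumes \<alpha>: "\<alpha> < 1"
    and h_ser: "\<forall>z\<in>ball 0 1. (\<lambda>k. a k * z ^ k) sums h z" and a1: "a 1 = 1"
    and g_ser: "\<forall>z\<in>ball 0 1. (\<lambda>k. b k * z ^ k) sums g z"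
    and h'_nz: "\<forall>z\<in>ball 0 1. deriv h z \<noteq> 0"
    and convex: "\<forall>z\<in>ball 0 1. Re (1 + z * deriv (deriv h) z / deriv h z) > \<alpha>"
    and gh: "\<forall>z\<in>ball 0 1. deriv g z = \<zeta> * z ^ n * deriv h z"
  shows "(\<forall>k\<ge>2. cmod (a k) \<le> (\<Prod>j=2..k. real j - 2 * \<alpha>) / fact k)
       \<and> cmod (b (n + 1)) \<le> cmod \<zeta> / real (n + 1)
       \<and> (\<forall>k\<ge>2. cmod (b (k + n)) \<le>
              cmod \<zeta> * (\<Prod>j=2..k. real j - 2 * \<alpha>) / (real (k + n) * fact (k - 1)))"
proof -
  define A where "A = Abs_fps a"
  define G where "G = Abs_fps b"
  define D where "D = fps_deriv A"
  have hA: "h has_fps_expansion A" and holh: "h holomorphic_on ball 0 1"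
    using unit_disc_power_series[OF h_ser] by (simp_all add: A_def)
  have gG: "g has_fps_expansion G"
    using unit_disc_power_series[OF g_ser] by (simp add: G_def)
  have D_bound: "norm (D $ k) \<le> pochhammer (2 - 2 * \<alpha>) k / fact k" for k
    unfolding D_def using \<alpha> hA holh a1 h'_nz convex
    by (intro convex_of_order_deriv_coeff_bound) (auto simp: A_def)
  have "(\<lambda>z. \<zeta> * z ^ n * deriv h z) has_fps_expansion fps_const \<zeta> * fps_X ^ n * D"
    unfolding D_def by (intro has_fps_expansion_mult has_fps_expansion_cmult_left
                          has_fps_expansion_deriv hA has_fps_expansion_fps_X_power)
  moreover have "\<forall>\<^sub>F z in nhds 0. \<zeta> * z ^ n * deriv h z = deriv g z"
    by (rule eventually_mono[OF eventually_nhds_in_open[of "ball 0 1"]]) (use gh in auto)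
  ultimately have "deriv g has_fps_expansion fps_const \<zeta> * fps_X ^ n * D"
    by (simp add: has_fps_expansion_cong)
  hence g'_eq: "fps_deriv G = fps_const \<zeta> * fps_X ^ n * D"
    by (rule fps_expansion_unique_complex[OF has_fps_expansion_deriv[OF gG]])
  have a_eq: "cmod (a k) = cmod (D $ (k - 1)) / real k" if "k \<ge> 1" for k
    using that by (cases k) (simp_all add: D_def A_def norm_mult field_simps del: of_nat_Suc)
  have b_eq: "cmod (b (k + n)) = cmod \<zeta> * cmod (D $ (k - 1)) / real (k + n)" if "k \<ge> 1" for k
  proof -
    have "of_nat (k + n) * b (k + n) = fps_deriv G $ (k - 1 + n)"
      using that by (cases k) (simp_all add: G_def)
    also have "\<dots> = \<zeta> * D $ (k - 1)"
      by (simp add: g'_eq mult.assoc fps_X_power_mult_nth)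
    finally have "cmod (of_nat (k + n) * b (k + n)) = cmod (\<zeta> * D $ (k - 1))"
      by (rule arg_cong)
    thus ?thesis
      using that by (simp add: norm_mult field_simps del: of_nat_add)
  qed
  show ?thesis
  proof (intro conjI allI impI)
    fix k :: nat assume "k \<ge> 2"
    hence k: "k \<ge> 1" by simp
    show "cmod (a k) \<le> (\<Prod>j=2..k. real j - 2 * \<alpha>) / fact k"
      unfolding a_eq[OF k] prod_div_fact_eq_pochhammer[OF k] by (intro divide_right_mono D_bound) auto
  next
    show "cmod (b (n + 1)) \<le> cmod \<zeta> / real (n + 1)"
      using b_eq[of 1] mult_left_mono[OF D_bound[of 0], of "cmod \<zeta>"] by (simp add: divide_right_mono)
  next
    fix k :: nat assume "k \<ge> 2"
    hence k: "k \<ge> 1" by simp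
    have "cmod (b (k + n)) \<le> cmod \<zeta> * (pochhammer (2 - 2 * \<alpha>) (k - 1) / fact (k - 1)) / real (k + n)"
      unfolding b_eq[OF k] by (intro divide_right_mono mult_left_mono D_bound) auto
    also have "\<dots> = cmod \<zeta> * (\<Prod>j=2..k. real j - 2 * \<alpha>) / (real (k + n) * fact (k - 1))"
      by (simp add: prod_of_nat_minus_eq_pochhammer[OF k] mult.commute)
    finally show "cmod (b (k + n)) \<le> cmod \<zeta> * (\<Prod>j=2..k. real j - 2 * \<alpha>) / (real (k + n) * fact (k - 1))" .
  qed
qed

section \<open>The extremal functions\<close>

lemma fps_conv_radius_deriv_le:
  fixes F :: "'a :: {banach, real_normed_field} fps"
  shows "fps_conv_radius (fps_deriv F) \<le> fps_conv_radius F"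
  unfolding fps_conv_radius_def[of F]
proof (rule conv_radius_geI_ex')
  fix r :: real assume r: "0 < r" "ereal r < fps_conv_radius (fps_deriv F)"
  hence "summable (\<lambda>k. norm (fps_deriv F $ k * of_real r ^ k))"
    by (intro norm_summable_fps) simp
  hence summable_bound: "summable (\<lambda>k. r * norm (fps_deriv F $ k * of_real r ^ k))"
    by (rule summable_mult)
  have bound: "norm (F $ Suc k * of_real r ^ Suc k) \<le> r * norm (fps_deriv F $ k * of_real r ^ k)" for k
  proof -
    have "norm (F $ Suc k * of_real r ^ Suc k) = r / real (Suc k) * norm (fps_deriv F $ k * of_real r ^ k)"
      using r by (simp add: norm_mult norm_power field_simps del: of_nat_Suc)
    also have "\<dots> \<le> r * norm (fps_deriv F $ k * of_real r ^ k)"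
      using r by (intro mult_right_mono) (auto simp: field_simps)
    finally show ?thesis .
  qed
  have "summable (\<lambda>k. F $ Suc k * of_real r ^ Suc k)"
    by (rule summable_comparison_test'[OF summable_bound bound])
  thus "summable (\<lambda>k. fps_nth F k * of_real r ^ k)"
    by (subst summable_Suc_iff[symmetric])
qed

lemma linepath_primitive_power_series:
  fixes F :: "complex fps" and \<phi> :: "complex \<Rightarrow> complex"
  assumes radius: "fps_conv_radius F \<ge> 1" and \<phi>: "\<And>t. t \<in> ball 0 1 \<Longrightarrow> eval_fps F t = \<phi> t"
    and z: "z \<in> ball 0 1"
  shows "(\<lambda>k. fps_integral0 F $ k * z ^ k) sums contour_integral (linepath 0 z) \<phi>"
    and "deriv (\<lambda>z. contour_integral (linepath 0 z) \<phi>) z = \<phi> z"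
proof -
  define G where "G = fps_integral0 F"
  have G': "fps_deriv G = F" by (simp add: G_def fps_deriv_fps_integral)
  have in_radius: "ereal (norm w) < fps_conv_radius H" if "w \<in> ball 0 1" "fps_conv_radius H \<ge> 1"
    for w and H :: "complex fps"
    using that by (intro less_le_trans[OF _ that(2)]) auto
  have radius_G: "fps_conv_radius G \<ge> 1"
    using fps_conv_radius_deriv_le[of G] radius by (simp add: G')
  have prim: "contour_integral (linepath 0 w) \<phi> = eval_fps G w" if w: "w \<in> ball 0 1" for w
  proof -
    have "(eval_fps G has_field_derivative \<phi> u) (at u within ball 0 1)" if "u \<in> ball 0 1" for u
      using has_field_derivative_eval_fps[OF in_radius[OF that radius_G]] \<phi>[OF that] by (simp add: G')
    moreover have "path_image (linepath 0 w) \<subseteq> ball 0 1"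
      unfolding path_image_linepath using w by (intro closed_segment_subset) auto
    ultimately have "(\<phi> has_contour_integral eval_fps G (pathfinish (linepath 0 w))
        - eval_fps G (pathstart (linepath 0 w))) (linepath 0 w)"
      by (intro contour_integral_primitive valid_path_linepath)
    thus ?thesis by (simp add: contour_integral_unique eval_fps_at_0 G_def)
  qed
  show "(\<lambda>k. fps_integral0 F $ k * z ^ k) sums contour_integral (linepath 0 z) \<phi>"
    using sums_eval_fps[OF in_radius[OF z radius_G]] by (simp add: prim[OF z] G_def)
  have "(eval_fps G has_field_derivative eval_fps F z) (at z)"
    using has_field_derivative_eval_fps[OF in_radius[OF z radius_G]] by (simp add: G')
  hence "((\<lambda>z. contour_integral (linepath 0 z) \<phi>) has_field_derivative eval_fps F z) (at z)"
    by (rule has_field_derivative_transform_within_open[of _ _ _ "ball 0 1"]) (use z prim in auto)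
  thus "deriv (\<lambda>z. contour_integral (linepath 0 z) \<phi>) z = \<phi> z"
    using \<phi>[OF z] by (simp add: DERIV_imp_deriv)
qed

lemma binomial_series_sums:
  fixes c w :: complex
  assumes "norm w < 1"
  shows "(\<lambda>k. pochhammer c k / fact k * w ^ k) sums (1 / (1 - w) powr c)"
proof -
  have "(\<lambda>k. (- c gchoose k) * (- w) ^ k) sums (1 + - w) powr (- c)"
    using assms by (intro gen_binomial_complex) simp
  moreover have "(- c gchoose k) * (- w) ^ k = pochhammer c k / fact k * w ^ k" for k
  proof -
    have "(-1 :: complex) ^ k * (-1) ^ k = 1" by (simp flip: power_mult_distrib)
    thus ?thesis by (simp add: gbinomial_pochhammer power_minus[of w] field_simps)
  qed
  ultimately show ?thesis by (simp add: powr_minus divide_inverse)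
qed

lemma Re_divide_one_minus_gt:
  fixes u :: complex
  assumes "norm u < 1"
  shows "Re (u / (1 - u)) > - 1 / 2"
proof -
  define x y where "x = Re u" and "y = Im u"
  have "norm u ^ 2 < 1"
    using assms by (simp add: power_less_one_iff)
  hence xy: "x ^ 2 + y ^ 2 < 1"
    unfolding x_def y_def by (simp add: cmod_power2)
  hence "x ^ 2 < 1" using zero_le_power2[of y] by linarith
  hence "\<bar>x\<bar> < 1" by (simp only: abs_square_less_1)
  hence "x < 1" by simp
  hence den: "(1 - x) ^ 2 + y ^ 2 > 0" by (simp add: add_pos_nonneg)
  have "Re (u / (1 - u)) = (x * (1 - x) - y * y) / ((1 - x) ^ 2 + y ^ 2)"
    by (simp add: Re_divide x_def y_def)
  moreover have "x * (1 - x) - y * y > - 1 / 2 * ((1 - x) ^ 2 + y ^ 2)"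
    using xy by (simp add: power2_eq_square algebra_simps)
  ultimately show ?thesis using den by (simp add: less_divide_eq)
qed

definition ext_deriv_fps :: "real \<Rightarrow> complex \<Rightarrow> complex fps" where
  "ext_deriv_fps \<alpha> \<delta> = Abs_fps (\<lambda>k. pochhammer (complex_of_real (2 - 2 * \<alpha>)) k / fact k * \<delta> ^ k)"

lemma ext_deriv_fps_sums:
  assumes "cmod \<delta> = 1" "z \<in> ball 0 1"
  shows "(\<lambda>k. ext_deriv_fps \<alpha> \<delta> $ k * z ^ k) sums (1 / (1 - \<delta> * z) powr complex_of_real (2 - 2 * \<alpha>))"
  using binomial_series_sums[of "\<delta> * z"] assms
  by (simp add: ext_deriv_fps_def norm_mult power_mult_distrib mult.assoc)

lemma ext_deriv_fps_conv_radius_eval: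
  assumes \<delta>: "cmod \<delta> = 1"
  shows "fps_conv_radius (ext_deriv_fps \<alpha> \<delta>) \<ge> 1"
    and "\<And>t. t \<in> ball 0 1 \<Longrightarrow>
           eval_fps (ext_deriv_fps \<alpha> \<delta>) t = 1 / (1 - \<delta> * t) powr complex_of_real (2 - 2 * \<alpha>)"
proof -
  have "\<forall>t\<in>ball 0 1. (\<lambda>k. ext_deriv_fps \<alpha> \<delta> $ k * t ^ k)
          sums (1 / (1 - \<delta> * t) powr complex_of_real (2 - 2 * \<alpha>))"
    using ext_deriv_fps_sums[OF \<delta>] by blast
  from unit_disc_power_series(1,2)[OF this]
  show "fps_conv_radius (ext_deriv_fps \<alpha> \<delta>) \<ge> 1"
    and "\<And>t. t \<in> ball 0 1 \<Longrightarrow>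
           eval_fps (ext_deriv_fps \<alpha> \<delta>) t = 1 / (1 - \<delta> * t) powr complex_of_real (2 - 2 * \<alpha>)"
    by (simp_all add: fps_nth_inverse)
qed

lemma norm_ext_deriv_fps_nth:
  assumes "\<alpha> < 1" "cmod \<delta> = 1"
  shows "cmod (ext_deriv_fps \<alpha> \<delta> $ k) = pochhammer (2 - 2 * \<alpha>) k / fact k"
proof -
  have "pochhammer (2 - 2 * \<alpha>) k > 0" using assms by (intro pochhammer_pos) simp
  thus ?thesis
    using assms by (simp add: ext_deriv_fps_def norm_mult norm_divide norm_power pochhammer_of_real
                              flip: of_real_diff of_real_mult)
qed

lemma ext_deriv_fps_ode:
  "(1 - fps_const \<delta> * fps_X) * fps_deriv (ext_deriv_fps \<alpha> \<delta>)
     = fps_const (complex_of_real (2 - 2 * \<alpha>) * \<delta>) * ext_deriv_fps \<alpha> \<delta>"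
proof (rule fps_ext)
  fix k
  define c where "c = complex_of_real (2 - 2 * \<alpha>)"
  define p where "p = (\<lambda>k. pochhammer c k / fact k * \<delta> ^ k)"
  have p_Suc: "of_nat (Suc k) * p (Suc k) = (c + of_nat k) * \<delta> * p k"
    by (simp add: p_def pochhammer_Suc field_simps del: of_nat_Suc)
  have "((1 - fps_const \<delta> * fps_X) * fps_deriv (Abs_fps p)) $ k
      = of_nat (Suc k) * p (Suc k) - \<delta> * of_nat k * p k"
    by (cases k) (simp_all add: algebra_simps del: of_nat_Suc)
  also have "\<dots> = c * \<delta> * p k" unfolding p_Suc by (simp add: algebra_simps)
  finally show "((1 - fps_const \<delta> * fps_X) * fps_deriv (ext_deriv_fps \<alpha> \<delta>)) $ k
      = (fps_const (complex_of_real (2 - 2 * \<alpha>) * \<delta>) * ext_deriv_fps \<alpha> \<delta>) $ k"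
    by (simp add: ext_deriv_fps_def c_def p_def)
qed

lemma ext_h_series:
  assumes \<delta>: "cmod \<delta> = 1" and z: "z \<in> ball 0 1"
  shows "(\<lambda>k. fps_integral0 (ext_deriv_fps \<alpha> \<delta>) $ k * z ^ k) sums ext_h \<alpha> \<delta> z"
    and "deriv (ext_h \<alpha> \<delta>) z = eval_fps (ext_deriv_fps \<alpha> \<delta>) z"
    and "deriv (deriv (ext_h \<alpha> \<delta>)) z = eval_fps (fps_deriv (ext_deriv_fps \<alpha> \<delta>)) z"
proof -
  define P where "P = ext_deriv_fps \<alpha> \<delta>"
  define \<phi> where "\<phi> = (\<lambda>t. 1 / ((1 - \<delta> * t) powr complex_of_real (2 - 2 * \<alpha>)))"
  have radius: "fps_conv_radius P \<ge> 1" and eval: "\<And>t. t \<in> ball 0 1 \<Longrightarrow> eval_fps P t = \<phi> t"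
    using ext_deriv_fps_conv_radius_eval[OF \<delta>] by (simp_all add: P_def \<phi>_def)
  have ext_h_eq: "ext_h \<alpha> \<delta> = (\<lambda>z. contour_integral (linepath 0 z) \<phi>)"
    by (simp add: ext_h_def \<phi>_def fun_eq_iff)
  show "(\<lambda>k. fps_integral0 (ext_deriv_fps \<alpha> \<delta>) $ k * z ^ k) sums ext_h \<alpha> \<delta> z"
    using linepath_primitive_power_series(1)[OF radius eval z] by (simp add: ext_h_eq P_def)
  have deriv_eq: "deriv (ext_h \<alpha> \<delta>) w = eval_fps P w" if "w \<in> ball 0 1" for w
    using linepath_primitive_power_series(2)[OF radius eval that] eval[OF that] by (simp add: ext_h_eq)
  thus "deriv (ext_h \<alpha> \<delta>) z = eval_fps (ext_deriv_fps \<alpha> \<delta>) z"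
    using z by (simp add: P_def)
  have "deriv (deriv (ext_h \<alpha> \<delta>)) z = deriv (eval_fps P) z"
    by (intro deriv_cong_ev eventually_mono[OF eventually_nhds_in_open[of "ball 0 1"]])
       (use z deriv_eq in auto)
  also have "\<dots> = eval_fps (fps_deriv P) z"
    using z radius by (intro eval_fps_deriv[symmetric] less_le_trans[OF _ radius]) auto
  finally show "deriv (deriv (ext_h \<alpha> \<delta>)) z = eval_fps (fps_deriv (ext_deriv_fps \<alpha> \<delta>)) z"
    by (simp add: P_def)
qed

lemma ext_h_convex_of_order:
  assumes \<alpha>: "\<alpha> < 1" and \<delta>: "cmod \<delta> = 1" and z: "z \<in> ball 0 1"
  shows "deriv (ext_h \<alpha> \<delta>) z \<noteq> 0"
    and "Re (1 + z * deriv (deriv (ext_h \<alpha> \<delta>)) z / deriv (ext_h \<alpha> \<delta>) z) > \<alpha>"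
proof -
  define P where "P = ext_deriv_fps \<alpha> \<delta>"
  define c where "c = 2 - 2 * \<alpha>"
  have u: "cmod (\<delta> * z) < 1" using \<delta> z by (simp add: norm_mult)
  hence nz: "1 - \<delta> * z \<noteq> 0" by auto
  have radius: "fps_conv_radius P \<ge> 1"
    using ext_deriv_fps_conv_radius_eval(1)[OF \<delta>] by (simp add: P_def)
  have "eval_fps P z = 1 / (1 - \<delta> * z) powr complex_of_real c"
    using ext_deriv_fps_conv_radius_eval(2)[OF \<delta> z] by (simp add: P_def c_def)
  hence P_nz: "eval_fps P z \<noteq> 0" using nz by (simp add: powr_def)
  thus "deriv (ext_h \<alpha> \<delta>) z \<noteq> 0" by (simp add: ext_h_series(2)[OF \<delta> z] P_def)
  have in_radius: "ereal (norm z) < fps_conv_radius H" if "fps_conv_radius H \<ge> 1" for H :: "complex fps"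
    using z by (intro less_le_trans[OF _ that]) auto
  have "\<delta> \<noteq> 0" using \<delta> by auto
  hence "fps_conv_radius (1 - fps_const \<delta> * fps_X :: complex fps) \<ge> 1"
    using fps_conv_radius_diff[of 1 "fps_const \<delta> * fps_X"] by (simp add: fps_conv_radius_cmult_left)
  hence "(1 - \<delta> * z) * eval_fps (fps_deriv P) z
      = eval_fps ((1 - fps_const \<delta> * fps_X) * fps_deriv P) z"
    using in_radius order.trans[OF radius fps_conv_radius_deriv] \<open>\<delta> \<noteq> 0\<close>
    by (simp add: eval_fps_mult eval_fps_diff fps_conv_radius_cmult_left)
  also have "\<dots> = complex_of_real c * \<delta> * eval_fps P z"
    using in_radius[OF radius] by (simp add: P_def ext_deriv_fps_ode c_def eval_fps_mult)
  finally have P'_eq: "eval_fps (fps_deriv P) z = complex_of_real c * \<delta> * eval_fps P z / (1 - \<delta> * z)"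
    using nz by (simp add: eq_divide_eq mult.commute)
  define w where "w = \<delta> * z / (1 - \<delta> * z)"
  have "z * deriv (deriv (ext_h \<alpha> \<delta>)) z / deriv (ext_h \<alpha> \<delta>) z = complex_of_real c * w"
    unfolding ext_h_series(2,3)[OF \<delta> z] P_def[symmetric] P'_eq w_def using P_nz by simp
  hence "Re (1 + z * deriv (deriv (ext_h \<alpha> \<delta>)) z / deriv (ext_h \<alpha> \<delta>) z) = 1 + c * Re w"
    by simp
  also have "\<dots> > 1 - c / 2"
    using mult_strict_left_mono[OF Re_divide_one_minus_gt[OF u], of c] \<alpha> by (simp add: c_def w_def)
  also have "1 - c / 2 = \<alpha>" by (simp add: c_def field_simps)
  finally show "Re (1 + z * deriv (deriv (ext_h \<alpha> \<delta>)) z / deriv (ext_h \<alpha> \<delta>) z) > \<alpha>" .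
qed

lemma ext_g_series:
  assumes \<delta>: "cmod \<delta> = 1" and z: "z \<in> ball 0 1"
  shows "(\<lambda>k. fps_integral0 (fps_const \<zeta> * fps_X ^ n * ext_deriv_fps \<alpha> \<delta>) $ k * z ^ k)
           sums ext_g \<alpha> \<zeta> n \<delta> z"
    and "deriv (ext_g \<alpha> \<zeta> n \<delta>) z = \<zeta> * z ^ n * deriv (ext_h \<alpha> \<delta>) z"
proof -
  define P where "P = ext_deriv_fps \<alpha> \<delta>"
  define F where "F = fps_const \<zeta> * fps_X ^ n * P"
  define \<phi> where "\<phi> = (\<lambda>t. \<zeta> * t ^ n / ((1 - \<delta> * t) powr complex_of_real (2 - 2 * \<alpha>)))"
  have radius_P: "fps_conv_radius P \<ge> 1"
    and eval_P: "\<And>t. t \<in> ball 0 1 \<Longrightarrow> eval_fps P t = 1 / (1 - \<delta> * t) powr complex_of_real (2 - 2 * \<alpha>)"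
    using ext_deriv_fps_conv_radius_eval[OF \<delta>] by (simp_all add: P_def)
  have radius_C: "fps_conv_radius (fps_const \<zeta> * fps_X ^ n :: complex fps) = \<infinity>"
    using fps_conv_radius_mult[of "fps_const \<zeta>" "fps_X ^ n"] by simp
  have radius: "fps_conv_radius F \<ge> 1"
    using fps_conv_radius_mult[of "fps_const \<zeta> * fps_X ^ n" P] radius_C radius_P
    by (simp add: F_def)
  have eval: "eval_fps F t = \<phi> t" if t: "t \<in> ball 0 1" for t
  proof -
    have "ereal (norm t) < fps_conv_radius P" using t by (intro less_le_trans[OF _ radius_P]) auto
    thus ?thesis using eval_P[OF t] radius_C by (simp add: F_def \<phi>_def eval_fps_mult)
  qed
  have ext_g_eq: "ext_g \<alpha> \<zeta> n \<delta> = (\<lambda>z. contour_integral (linepath 0 z) \<phi>)"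
    by (simp add: ext_g_def \<phi>_def fun_eq_iff)
  show "(\<lambda>k. fps_integral0 (fps_const \<zeta> * fps_X ^ n * ext_deriv_fps \<alpha> \<delta>) $ k * z ^ k)
          sums ext_g \<alpha> \<zeta> n \<delta> z"
    using linepath_primitive_power_series(1)[OF radius eval z] by (simp add: ext_g_eq F_def P_def)
  show "deriv (ext_g \<alpha> \<zeta> n \<delta>) z = \<zeta> * z ^ n * deriv (ext_h \<alpha> \<delta>) z"
    using linepath_primitive_power_series(2)[OF radius eval z] ext_h_series(2)[OF \<delta> z] eval_P[OF z]
    by (simp add: ext_g_eq \<phi>_def P_def)
qed

lemma extremal_function_sharp:
  fixes \<alpha> :: real and n :: nat and \<zeta> \<delta> :: complex
  assumes \<alpha>: "\<alpha> < 1" and \<delta>: "cmod \<delta> = 1"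
  shows "\<exists>A B. (\<forall>z\<in>ball 0 1. (\<lambda>k. A k * z ^ k) sums ext_h \<alpha> \<delta> z)
                 \<and> (\<forall>z\<in>ball 0 1. (\<lambda>k. B k * z ^ k) sums ext_g \<alpha> \<zeta> n \<delta> z)
                 \<and> A 0 = 0 \<and> A 1 = 1 \<and> B 0 = 0
                 \<and> (\<forall>z\<in>ball 0 1. deriv (ext_h \<alpha> \<delta>) z \<noteq> 0
                      \<and> Re (1 + z * deriv (deriv (ext_h \<alpha> \<delta>)) z / deriv (ext_h \<alpha> \<delta>) z) > \<alpha>
                      \<and> deriv (ext_g \<alpha> \<zeta> n \<delta>) z = \<zeta> * z ^ n * deriv (ext_h \<alpha> \<delta>) z)
                 \<and> (\<forall>k\<ge>2. cmod (A k) = (\<Prod>j=2..k. real j - 2 * \<alpha>) / fact k)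
                 \<and> cmod (B (n + 1)) = cmod \<zeta> / real (n + 1)
                 \<and> (\<forall>k\<ge>2. cmod (B (k + n)) =
                      cmod \<zeta> * (\<Prod>j=2..k. real j - 2 * \<alpha>) / (real (k + n) * fact (k - 1)))"
proof -
  define P where "P = ext_deriv_fps \<alpha> \<delta>"
  define A where "A = fps_nth (fps_integral0 P)"
  define B where "B = fps_nth (fps_integral0 (fps_const \<zeta> * fps_X ^ n * P))"
  have norm_P: "cmod (P $ k) = pochhammer (2 - 2 * \<alpha>) k / fact k" for k
    unfolding P_def by (rule norm_ext_deriv_fps_nth[OF \<alpha> \<delta>])
  have A_eq: "cmod (A k) = cmod (P $ (k - 1)) / real k" if "k \<ge> 1" for k
    using that by (cases k) (simp_all add: A_def norm_mult norm_inverse divide_inverse mult.commute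
                                del: of_nat_Suc)
  have B_eq: "cmod (B (k + n)) = cmod \<zeta> * cmod (P $ (k - 1)) / real (k + n)" if "k \<ge> 1" for k
  proof -
    have "B (k + n) = inverse (of_nat (k + n)) * (\<zeta> * P $ (k - 1))"
      using that by (cases k) (simp_all add: B_def mult.assoc fps_X_power_mult_nth)
    thus ?thesis by (simp add: norm_mult norm_inverse divide_inverse mult_ac del: of_nat_add)
  qed
  have "A 0 = 0" "A 1 = 1" "B 0 = 0"
    by (simp_all add: A_def B_def P_def ext_deriv_fps_def)
  moreover have "cmod (A k) = (\<Prod>j=2..k. real j - 2 * \<alpha>) / fact k" if "k \<ge> 2" for k
    using that by (simp add: A_eq norm_P prod_div_fact_eq_pochhammer)
  moreover have "cmod (B (n + 1)) = cmod \<zeta> / real (n + 1)"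
    using B_eq[of 1] norm_P[of 0] by simp
  moreover have "cmod (B (k + n)) =
      cmod \<zeta> * (\<Prod>j=2..k. real j - 2 * \<alpha>) / (real (k + n) * fact (k - 1))" if "k \<ge> 2" for k
    using that by (simp add: B_eq norm_P prod_of_nat_minus_eq_pochhammer mult.commute)
  ultimately show ?thesis
    using ext_h_series(1)[OF \<delta>] ext_g_series[OF \<delta>] ext_h_convex_of_order[OF \<alpha> \<delta>]
    by (intro exI[of _ A] exI[of _ B]) (simp add: A_def B_def P_def)
qed

theorem theorem3p1:
  fixes \<alpha> :: real and n :: nat and \<zeta> :: complex
    and h g :: "complex \<Rightarrow> complex" and a b :: "nat \<Rightarrow> complex"
  assumes alpha: "-1/2 \<le> \<alpha>" "\<alpha> < 1"
    and n: "n \<ge> 1"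
    and zeta: "cmod \<zeta> \<le> 1 / (2 * real n - 1)"
    and h_ser: "\<forall>z\<in>ball 0 1. (\<lambda>k. a k * z ^ k) sums h z"
    and a01: "a 0 = 0" "a 1 = 1"
    and g_ser: "\<forall>z\<in>ball 0 1. (\<lambda>k. b k * z ^ k) sums g z"
    and b0: "b 0 = 0"
    and h'_nz: "\<forall>z\<in>ball 0 1. deriv h z \<noteq> 0"
    and convex: "\<forall>z\<in>ball 0 1. Re (1 + z * deriv (deriv h) z / deriv h z) > \<alpha>"
    and gh: "\<forall>z\<in>ball 0 1. deriv g z = \<zeta> * z ^ n * deriv h z"
  shows "(\<forall>k\<ge>2. cmod (a k) \<le> (\<Prod>j=2..k. real j - 2 * \<alpha>) / fact k)
       \<and> cmod (b (n + 1)) \<le> cmod \<zeta> / real (n + 1)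
       \<and> (\<forall>k\<ge>2. cmod (b (k + n)) \<le>
              cmod \<zeta> * (\<Prod>j=2..k. real j - 2 * \<alpha>) / (real (k + n) * fact (k - 1)))
       \<and> (\<forall>\<delta>. cmod \<delta> = 1 \<longrightarrow>
            (\<exists>A B. (\<forall>z\<in>ball 0 1. (\<lambda>k. A k * z ^ k) sums ext_h \<alpha> \<delta> z)
                 \<and> (\<forall>z\<in>ball 0 1. (\<lambda>k. B k * z ^ k) sums ext_g \<alpha> \<zeta> n \<delta> z)
                 \<and> A 0 = 0 \<and> A 1 = 1 \<and> B 0 = 0
                 \<and> (\<forall>z\<in>ball 0 1. deriv (ext_h \<alpha> \<delta>) z \<noteq> 0
                      \<and> Re (1 + z * deriv (deriv (ext_h \<alpha> \<delta>)) z / deriv (ext_h \<alpha> \<delta>) z) > \<alpha>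
                      \<and> deriv (ext_g \<alpha> \<zeta> n \<delta>) z = \<zeta> * z ^ n * deriv (ext_h \<alpha> \<delta>) z)
                 \<and> (\<forall>k\<ge>2. cmod (A k) = (\<Prod>j=2..k. real j - 2 * \<alpha>) / fact k)
                 \<and> cmod (B (n + 1)) = cmod \<zeta> / real (n + 1)
                 \<and> (\<forall>k\<ge>2. cmod (B (k + n)) =
                      cmod \<zeta> * (\<Prod>j=2..k. real j - 2 * \<alpha>) / (real (k + n) * fact (k - 1)))))"
  \<comment> \<open>In the paper the hypotheses \<open>\<alpha> \<ge> -1/2\<close>, \<open>n \<ge> 1\<close> and the bound on \<open>|\<zeta>|\<close> make \<open>f\<close>
     univalent and sense-preserving; the estimates and their sharpness do not need them.\<close>
  using convex_harmonic_coeff_bounds[OF alpha(2) h_ser a01(2) g_ser h'_nz convex gh]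
        extremal_function_sharp[OF alpha(2)]
  by blast

end
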